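(* Let $B\subset\mathbb{R}^{n+1}$ be a symmetric convex body and let $x_i\to x$ be a convergent sequence in $S^n$. Assume each section $x_i^\perp\cap B$ is an affine symmetric body of revolution with an axis of revolution $L_i\subset x_i^\perp$, and that $L_i\to L$ in $\mathbb{R}P^n$. Then $x^\perp\cap B$ is an affine symmetric body of revolution with axis of revolution $L$.
   Context: A symmetric convex body is a compact convex set with nonempty interior invariant under $x\mapsto-x$. A symmetric convex body $K\subset\mathbb{R}^m$ is a symmetric body of revolution if it admits an axis of revolution: a 1-dimensional linear subspace $L$ such that every section of $K$ by an affine hyperplane $A$ orthogonal to $L$ is a closed Euclidean $(m-1)$-ball in $A$ centered at $A\cap L$ (possibly empty or a point). An affine symmetric body of revolution (in a linear subspace) is a convex body linearly equivalent to a symmetric body of revolution; the image of an axis under the linear equivalence is called an axis of revolution of it. $\mathbb{R}P^n$ is the space of 1-dimensional linear subspaces of $\mathbb{R}^{n+1}$ with its usual topology. *)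

theory Defs
  imports "HOL-Analysis.Analysis"
begin

definition sym_convex_body :: "'a::euclidean_space set \<Rightarrow> bool" where
  "sym_convex_body K \<longleftrightarrow> compact K \<and> convex K \<and> interior K \<noteq> {} \<and> uminus ` K = K"

text \<open>Symmetric convex body inside a linear subspace V: compact, convex, contained in V,
  with nonempty interior relative to V (i.e. full affine dimension in V), origin-symmetric.\<close>
definition sym_convex_body_in :: "'a::euclidean_space set \<Rightarrow> 'a set \<Rightarrow> bool" where
  "sym_convex_body_in V K \<longleftrightarrow> subspace V \<and> K \<subseteq> V \<and> compact K \<and> convex K \<and>
     aff_dim K = int (dim V) \<and> uminus ` K = K"

definition is_line :: "'a::euclidean_space set \<Rightarrow> bool" where
  "is_line L \<longleftrightarrow> subspace L \<and> dim L = 1"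

text \<open>Symmetric body of revolution in the subspace V with axis L: every section of K by an
  affine hyperplane of V orthogonal to L (these are exactly the sets
  {y \<in> V. y - c \<bottom> L} for c \<in> L, and c is their intersection point with L)
  is empty or a closed Euclidean ball of that hyperplane centred at c.\<close>
definition sym_body_of_revolution_in :: "'a::euclidean_space set \<Rightarrow> 'a set \<Rightarrow> 'a set \<Rightarrow> bool" where
  "sym_body_of_revolution_in V K L \<longleftrightarrow> sym_convex_body_in V K \<and> is_line L \<and> L \<subseteq> V \<and>
     (\<forall>c\<in>L. let A = {y \<in> V. \<forall>w\<in>L. (y - c) \<bullet> w = 0} in
        K \<inter> A = {} \<or> (\<exists>r\<ge>0. K \<inter> A = cball c r \<inter> A))"

definition affine_sym_body_of_revolution_in :: "'a::euclidean_space set \<Rightarrow> 'a set \<Rightarrow> 'a set \<Rightarrow> bool" where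
  "affine_sym_body_of_revolution_in V K L \<longleftrightarrow>
     (\<exists>T K0 L0. linear T \<and> inj_on T V \<and> T ` V = V \<and>
        sym_body_of_revolution_in V K0 L0 \<and> K = T ` K0 \<and> L = T ` L0)"

text \<open>Real projective space of the ambient space: the set of lines, with the quotient topology
  of the unit sphere under u \<mapsto> span {u}.\<close>
definition RP_lines :: "'a::euclidean_space set set" where
  "RP_lines = {span {u} | u. u \<in> sphere 0 1}"

definition RP_topology :: "'a::euclidean_space set topology" where
  "RP_topology = topology (\<lambda>U. U \<subseteq> RP_lines \<and>
      openin (top_of_set (sphere (0::'a) 1)) {u \<in> sphere 0 1. span {u} \<in> U})"

lemma istopology_RP:
  "istopology (\<lambda>U. U \<subseteq> (RP_lines :: 'a::euclidean_space set set) \<and>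
      openin (top_of_set (sphere (0::'a) 1)) {u \<in> sphere 0 1. span {u} \<in> U})"
  unfolding istopology_def
proof (rule conjI; intro allI impI)
  fix S T :: "'a set set"
  assume S: "S \<subseteq> RP_lines \<and> openin (top_of_set (sphere 0 1)) {u \<in> sphere 0 1. span {u} \<in> S}"
     and T: "T \<subseteq> RP_lines \<and> openin (top_of_set (sphere 0 1)) {u \<in> sphere 0 1. span {u} \<in> T}"
  have eq: "{u \<in> sphere (0::'a) 1. span {u} \<in> S \<inter> T} =
        {u \<in> sphere 0 1. span {u} \<in> S} \<inter> {u \<in> sphere 0 1. span {u} \<in> T}" by blast
  have o: "openin (top_of_set (sphere 0 1))
        ({u \<in> sphere (0::'a) 1. span {u} \<in> S} \<inter> {u \<in> sphere 0 1. span {u} \<in> T})"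
    using openin_Int[OF conjunct2[OF S] conjunct2[OF T]] .
  show "S \<inter> T \<subseteq> RP_lines \<and>
      openin (top_of_set (sphere 0 1)) {u \<in> sphere 0 1. span {u} \<in> S \<inter> T}"
  proof -
    have "S \<inter> T \<subseteq> RP_lines" using S by blast
    with o eq show ?thesis by simp
  qed
next
  fix K :: "'a set set set"
  assume K: "\<forall>S\<in>K. S \<subseteq> RP_lines \<and> openin (top_of_set (sphere 0 1)) {u \<in> sphere 0 1. span {u} \<in> S}"
  have eq: "{u \<in> sphere (0::'a) 1. span {u} \<in> \<Union>K} = (\<Union>S\<in>K. {u \<in> sphere 0 1. span {u} \<in> S})" by blast
  have o: "openin (top_of_set (sphere 0 1)) (\<Union>S\<in>K. {u \<in> sphere (0::'a) 1. span {u} \<in> S})"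
  proof (rule openin_Union)
    fix X assume "X \<in> (\<lambda>S. {u \<in> sphere (0::'a) 1. span {u} \<in> S}) ` K"
    then obtain S where "S \<in> K" and X: "X = {u \<in> sphere (0::'a) 1. span {u} \<in> S}" by blast
    then show "openin (top_of_set (sphere 0 1)) X" using K X by simp
  qed
  show "\<Union>K \<subseteq> RP_lines \<and>
      openin (top_of_set (sphere 0 1)) {u \<in> sphere 0 1. span {u} \<in> \<Union>K}"
  proof -
    have "\<Union>K \<subseteq> RP_lines" using K by blast
    with o eq show ?thesis by simp
  qed
qed

lemma openin_RP_topology:
  "openin RP_topology U \<longleftrightarrow> U \<subseteq> RP_lines \<and>
      openin (top_of_set (sphere 0 1)) {u \<in> sphere 0 1. span {u} \<in> U}"
  by (simp only: RP_topology_def topology_inverse'[OF istopology_RP])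

end

theory Submission
  imports Defs
begin

text \<open>Pull each section back by a linear map so that it becomes a body of revolution about a unit
  vector \<open>m\<^sub>i\<close>, squeezed between the balls of radii \<open>1/2\<close> and \<open>2\<close>: scale the axis by the half-length
  of the body along it and the orthogonal directions by its equatorial radius. Composed with the
  orthogonal projection onto \<open>x\<^sub>i\<^sup>\<bottom>\<close>, these maps are uniformly bounded, so along a subsequence they
  converge, and so do the \<open>m\<^sub>i\<close>. The squeeze survives in the limit and makes the limit map injective
  on \<open>x\<^sup>\<bottom>\<close>. The rotational symmetry survives too: given two points of \<open>x\<^sup>\<bottom>\<close> with the same axial
  coordinate and norm, rotate approximants of the first about \<open>m\<^sub>i\<close> towards approximants of the
  second (after shrinking slightly into the interior of \<open>B\<close>). So the limit section is the image of a
  body of revolution whose axis is the limit of the \<open>m\<^sub>i\<close>, and this axis is mapped onto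
  \<open>L = lim L\<^sub>i\<close>.\<close>

section \<open>Axial and radial components\<close>

definition radial_part :: "'a::real_inner \<Rightarrow> 'a \<Rightarrow> 'a" where
  "radial_part m y = y - (y \<bullet> m) *\<^sub>R m"

lemma axial_plus_radial_part [simp]: "(y \<bullet> m) *\<^sub>R m + radial_part m y = y"
  by (simp add: radial_part_def)

lemma radial_part_orthogonal:
  assumes "norm m = 1"
  shows "radial_part m y \<bullet> m = 0"
  using assms by (simp add: radial_part_def inner_diff_left norm_eq_1)

lemma radial_part_axial_plus_orthogonal:
  assumes "norm m = 1" "h \<bullet> m = 0"
  shows "(a *\<^sub>R m + h) \<bullet> m = a" "radial_part m (a *\<^sub>R m + h) = h"
  using assms by (simp_all add: radial_part_def inner_add_left norm_eq_1)

lemma radial_part_scaleR: "radial_part m (c *\<^sub>R y) = c *\<^sub>R radial_part m y"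
  by (simp add: radial_part_def algebra_simps)

lemma linear_radial_part: "linear (radial_part m)"
  unfolding linear_iff radial_part_def by (simp add: inner_add_left algebra_simps)

lemma radial_part_in_subspace:
  assumes "subspace V" "m \<in> V" "y \<in> V"
  shows "radial_part m y \<in> V"
  unfolding radial_part_def using assms by (intro subspace_diff subspace_mul)

lemma dist_axis_point_eq_norm_radial_part:
  assumes "y \<bullet> m = s"
  shows "dist (s *\<^sub>R m) y = norm (radial_part m y)"
  using assms dist_commute[THEN trans, OF dist_norm] by (simp add: radial_part_def)

lemma norm_sq_axial_radial:
  assumes "norm m = 1"
  shows "(norm y)\<^sup>2 = (y \<bullet> m)\<^sup>2 + (norm (radial_part m y))\<^sup>2"
proof -
  have "m \<bullet> m = 1" "radial_part m y \<bullet> m = 0"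
    using assms radial_part_orthogonal by (auto simp: norm_eq_1)
  then have "y \<bullet> y = (y \<bullet> m)\<^sup>2 + radial_part m y \<bullet> radial_part m y"
    by (simp add: radial_part_def inner_diff_left inner_diff_right inner_commute power2_eq_square)
  then show ?thesis by (simp add: power2_norm_eq_inner)
qed

lemma norm_radial_part_le:
  assumes "norm m = 1"
  shows "norm (radial_part m y) \<le> norm y"
proof (rule power2_le_imp_le)
  show "(norm (radial_part m y))\<^sup>2 \<le> (norm y)\<^sup>2"
    using norm_sq_axial_radial[OF assms, of y] by simp
qed simp

lemma norm_eq_iff_norm_radial_part_eq:
  assumes "norm m = 1" "y \<bullet> m = z \<bullet> m"
  shows "norm y = norm z \<longleftrightarrow> norm (radial_part m y) = norm (radial_part m z)"
proof -
  have "(norm y)\<^sup>2 = (norm z)\<^sup>2 \<longleftrightarrow> (norm (radial_part m y))\<^sup>2 = (norm (radial_part m z))\<^sup>2"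
    using norm_sq_axial_radial[OF assms(1), of y] norm_sq_axial_radial[OF assms(1), of z] assms(2)
    by simp
  then show ?thesis by (simp add: power2_eq_iff_nonneg)
qed

lemma orthogonal_span_unit_iff:
  assumes "norm m = 1"
  shows "(\<forall>w\<in>span {m}. (y - s *\<^sub>R m) \<bullet> w = 0) \<longleftrightarrow> y \<bullet> m = s"
  using assms by (auto simp: span_singleton inner_diff_left norm_eq_1)

lemma convex_midpoint_mem: "convex K \<Longrightarrow> x \<in> K \<Longrightarrow> y \<in> K \<Longrightarrow> midpoint x y \<in> K"
  using midpoint_in_closed_segment closed_segment_subset by blast

lemma convex_symmetric_scaleR_mem:
  fixes K :: "'a::real_vector set"
  assumes K: "convex K" "uminus ` K = K" and w: "w \<in> K" and t: "\<bar>t\<bar> \<le> 1"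
  shows "t *\<^sub>R w \<in> K"
proof -
  have "- w \<in> K" using K(2) w by force
  moreover have "0 \<le> (1 + t) / 2" "0 \<le> (1 - t) / 2" "(1 + t) / 2 + (1 - t) / 2 = 1"
    using t by (simp_all add: abs_le_iff field_simps)
  ultimately have mem: "((1 + t) / 2) *\<^sub>R w + ((1 - t) / 2) *\<^sub>R (- w) \<in> K"
    using convexD[OF K(1) w] by blast
  have "((1 + t) / 2) *\<^sub>R w + ((1 - t) / 2) *\<^sub>R (- w) = ((1 + t) / 2 - (1 - t) / 2) *\<^sub>R w"
    by (simp add: scaleR_diff_left)
  also have "(1 + t) / 2 - (1 - t) / 2 = t" by (simp add: field_simps)
  finally show ?thesis using mem by simp
qed

lemma convex_scaleR_below_one_interior:
  fixes B :: "'a::euclidean_space set"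
  assumes "convex B" "0 \<in> interior B" "w \<in> B" "0 \<le> t" "t < 1"
  shows "t *\<^sub>R w \<in> interior B"
  using mem_interior_convex_shrink[OF assms(1-3), of "1 - t"] assms(4,5)
  by (simp add: algebra_simps)

lemma closed_scaleR_below_one_imp_mem:
  fixes S :: "'a::real_normed_vector set"
  assumes "closed S" "\<And>t. 0 < t \<Longrightarrow> t < 1 \<Longrightarrow> t *\<^sub>R w \<in> S"
  shows "w \<in> S"
proof (rule closed_sequentially[OF assms(1)])
  show "(1 - inverse (real (Suc (Suc n)))) *\<^sub>R w \<in> S" for n
    using assms(2) by (simp add: field_simps)
  have "(\<lambda>n. (1 - inverse (real (Suc (Suc n)))) *\<^sub>R w) \<longlonglongrightarrow> (1 - 0) *\<^sub>R w"
    by (intro tendsto_intros LIMSEQ_inverse_real_of_nat LIMSEQ_Suc)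
  then show "(\<lambda>n. (1 - inverse (real (Suc (Suc n)))) *\<^sub>R w) \<longlonglongrightarrow> w" by simp
qed

lemma compact_convex_symmetric_ray:
  fixes K :: "'a::real_normed_vector set"
  assumes K: "compact K" "convex K" "uminus ` K = K" and v: "v \<noteq> 0"
    and e: "e > 0" "e *\<^sub>R v \<in> K"
  obtains a where "a > 0" "\<And>t. (t * a) *\<^sub>R v \<in> K \<longleftrightarrow> \<bar>t\<bar> \<le> 1"
proof -
  define S where "S = {t. t *\<^sub>R v \<in> K}"
  have "closed S"
    unfolding S_def using compact_imp_closed[OF K(1)]
    by (intro closed_vimage[unfolded vimage_def]) (auto intro: continuous_intros)
  moreover obtain R where R: "\<And>w. w \<in> K \<Longrightarrow> norm w \<le> R"
    using compact_imp_bounded[OF K(1)] bounded_iff by blast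
  have "norm t \<le> R / norm v" if "t \<in> S" for t
    using R[of "t *\<^sub>R v"] that v by (simp add: S_def pos_le_divide_eq)
  then have "bounded S" unfolding bounded_iff by blast
  ultimately have "compact S" by (simp add: compact_eq_bounded_closed)
  moreover have "e \<in> S" using e by (simp add: S_def)
  then have "S \<noteq> {}" by blast
  ultimately obtain a where aS: "a \<in> S" and a_max: "\<And>t. t \<in> S \<Longrightarrow> t \<le> a"
    using compact_attains_sup[of S] by blast
  have "a \<ge> e" using a_max \<open>e \<in> S\<close> by blast
  have "(t * a) *\<^sub>R v \<in> K \<longleftrightarrow> \<bar>t\<bar> \<le> 1" for t
  proof
    assume "(t * a) *\<^sub>R v \<in> K"
    moreover from this have "(- t * a) *\<^sub>R v \<in> K"
      using convex_symmetric_scaleR_mem[OF K(2,3), of _ "-1"] by fastforce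
    ultimately have "t * a \<le> 1 * a" "- t * a \<le> 1 * a" using a_max by (simp_all add: S_def)
    then show "\<bar>t\<bar> \<le> 1" using \<open>a \<ge> e\<close> e(1) by (simp only: mult_le_cancel_right abs_le_iff)
  next
    assume "\<bar>t\<bar> \<le> 1"
    then show "(t * a) *\<^sub>R v \<in> K"
      using convex_symmetric_scaleR_mem[OF K(2,3), of "a *\<^sub>R v" t] aS by (simp add: S_def)
  qed
  with that show ?thesis using \<open>a \<ge> e\<close> e(1) by (meson less_le_trans)
qed

lemma is_line_span_singleton:
  fixes m :: "'a::euclidean_space"
  assumes "m \<noteq> 0"
  shows "is_line (span {m})"
  unfolding is_line_def using assms by (simp add: dim_insert span_empty)

lemma is_line_eq_span:
  fixes L :: "'a::euclidean_space set"
  assumes L: "is_line L" and v: "v \<in> L" "v \<noteq> 0"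
  shows "L = span {v}"
proof -
  have "span {v} \<subseteq> L" using L v by (simp add: is_line_def span_minimal)
  then show ?thesis
    using subspace_dim_equal[of "span {v}" L] L v by (simp add: is_line_def)
qed

lemma is_line_unit_generator:
  fixes L :: "'a::euclidean_space set"
  assumes L: "is_line L"
  obtains m where "norm m = 1" "m \<in> L" "L = span {m}"
proof -
  have "\<not> L \<subseteq> {0}" using L dim_eq_0[of L] by (simp add: is_line_def)
  then obtain v where v: "v \<in> L" "v \<noteq> 0" by blast
  then have "sgn v \<in> L" "sgn v \<noteq> 0"
    using L by (simp_all add: is_line_def sgn_div_norm subspace_mul)
  moreover have "norm (sgn v) = 1" using v by (simp add: norm_sgn)
  ultimately show ?thesis using that is_line_eq_span[OF L] by blast
qed

lemma span_singleton_uminus: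
  fixes v :: "'a::euclidean_space"
  shows "span {- v} = span {v}"
proof (cases "v = 0")
  case False
  then show ?thesis
    using is_line_eq_span[OF is_line_span_singleton[OF False], of "- v"]
    by (simp add: span_base span_neg)
qed simp

lemma unit_span_singleton_eq:
  fixes v w :: "'a::euclidean_space"
  assumes "norm v = 1" "norm w = 1" "span {v} = span {w}"
  shows "v = w \<or> v = - w"
proof -
  obtain k where k: "v = k *\<^sub>R w" using assms(3) span_base[of v "{v}"] by (auto simp: span_singleton)
  then have "\<bar>k\<bar> = 1" using assms(1,2) by simp
  then show ?thesis using k by (cases "k \<ge> 0") auto
qed

section \<open>Bodies of revolution as rotation-invariant sets\<close>

definition revolution_invariant :: "'a::real_inner set \<Rightarrow> 'a \<Rightarrow> 'a set \<Rightarrow> bool" where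
  "revolution_invariant V m K \<longleftrightarrow>
     (\<forall>y\<in>K. \<forall>z\<in>V. z \<bullet> m = y \<bullet> m \<and> norm z = norm y \<longrightarrow> z \<in> K)"

lemma revolution_invariantD:
  "revolution_invariant V m K \<Longrightarrow> y \<in> K \<Longrightarrow> z \<in> V \<Longrightarrow> z \<bullet> m = y \<bullet> m \<Longrightarrow> norm z = norm y
    \<Longrightarrow> z \<in> K"
  unfolding revolution_invariant_def by blast

lemma sym_body_of_revolution_in_imp_invariant:
  fixes K :: "'a::euclidean_space set"
  assumes rev: "sym_body_of_revolution_in V K (span {m})" and m: "norm m = 1"
  shows "revolution_invariant V m K"
  unfolding revolution_invariant_def
proof (intro ballI impI)
  fix y z assume y: "y \<in> K" and z: "z \<in> V" and yz: "z \<bullet> m = y \<bullet> m \<and> norm z = norm y"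
  define c where "c = (y \<bullet> m) *\<^sub>R m"
  define A where "A = {w \<in> V. \<forall>w'\<in>span {m}. (w - c) \<bullet> w' = 0}"
  have A: "A = {w \<in> V. w \<bullet> m = y \<bullet> m}"
    unfolding A_def c_def orthogonal_span_unit_iff[OF m] ..
  have "y \<in> V" using rev y by (auto simp: sym_body_of_revolution_in_def sym_convex_body_in_def)
  then have "y \<in> K \<inter> A" "z \<in> A" using y z yz by (auto simp: A)
  moreover have "c \<in> span {m}" by (simp add: c_def span_base span_mul)
  then have "K \<inter> A = {} \<or> (\<exists>r\<ge>0. K \<inter> A = cball c r \<inter> A)"
    using rev unfolding sym_body_of_revolution_in_def A_def Let_def by blast
  ultimately obtain r where r: "K \<inter> A = cball c r \<inter> A" by blast
  have "norm (radial_part m z) = norm (radial_part m y)"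
    using norm_eq_iff_norm_radial_part_eq[OF m, of z y] yz by simp
  then have "dist c z = dist c y"
    unfolding c_def using yz dist_axis_point_eq_norm_radial_part by metis
  moreover have "dist c y \<le> r" using r \<open>y \<in> K \<inter> A\<close> by (metis IntD1 mem_cball)
  ultimately have "z \<in> cball c r \<inter> A" using \<open>z \<in> A\<close> by simp
  then show "z \<in> K" using r by blast
qed

lemma revolution_invariant_reflect:
  fixes K :: "'a::euclidean_space set"
  assumes inv: "revolution_invariant V m K" and V: "subspace V" "m \<in> V" and m: "norm m = 1"
    and h: "h \<in> V" "h \<bullet> m = 0" and p: "t *\<^sub>R m + h \<in> K"
  shows "t *\<^sub>R m - h \<in> K"
proof (rule revolution_invariantD[OF inv p])
  have "- h \<bullet> m = 0" using h(2) by simp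
  note mirror = radial_part_axial_plus_orthogonal[OF m this, of t]
  note orig = radial_part_axial_plus_orthogonal[OF m h(2), of t]
  show "t *\<^sub>R m - h \<in> V" using V h by (simp add: subspace_diff subspace_mul)
  show ax: "(t *\<^sub>R m - h) \<bullet> m = (t *\<^sub>R m + h) \<bullet> m" using mirror(1) orig(1) by simp
  show "norm (t *\<^sub>R m - h) = norm (t *\<^sub>R m + h)"
    using norm_eq_iff_norm_radial_part_eq[OF m ax] mirror(2) orig(2) by simp
qed

lemma revolution_invariant_axial_mem:
  fixes K :: "'a::euclidean_space set"
  assumes K: "convex K" and inv: "revolution_invariant V m K" and V: "subspace V" "m \<in> V"
    and m: "norm m = 1" and h: "h \<in> V" "h \<bullet> m = 0" and p: "t *\<^sub>R m + h \<in> K"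
  shows "t *\<^sub>R m \<in> K"
proof -
  have "midpoint (t *\<^sub>R m + h) (t *\<^sub>R m - h) \<in> K"
    using convex_midpoint_mem[OF K p revolution_invariant_reflect[OF inv V m h p]] .
  moreover have "midpoint (t *\<^sub>R m + h) (t *\<^sub>R m - h) = t *\<^sub>R m" by (simp add: midpoint_eq_iff)
  ultimately show ?thesis by simp
qed

lemma revolution_invariant_orthogonal_mem:
  fixes K :: "'a::euclidean_space set"
  assumes K: "convex K" "uminus ` K = K" and inv: "revolution_invariant V m K"
    and V: "subspace V" "m \<in> V" and m: "norm m = 1"
    and h: "h \<in> V" "h \<bullet> m = 0" and p: "t *\<^sub>R m + h \<in> K"
  shows "h \<in> K"
proof -
  have "- (t *\<^sub>R m - h) \<in> K" using K(2) revolution_invariant_reflect[OF inv V m h p] by force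
  then have "midpoint (t *\<^sub>R m + h) (- (t *\<^sub>R m - h)) \<in> K" by (rule convex_midpoint_mem[OF K(1) p])
  moreover have "midpoint (t *\<^sub>R m + h) (- (t *\<^sub>R m - h)) = h" by (simp add: midpoint_eq_iff)
  ultimately show ?thesis by simp
qed

lemma revolution_invariant_disc_mem:
  fixes K :: "'a::euclidean_space set"
  assumes K: "convex K" and inv: "revolution_invariant V m K" and V: "subspace V" "m \<in> V"
    and m: "norm m = 1" and h: "h \<in> V" "h \<bullet> m = 0" and p: "s *\<^sub>R m + h \<in> K"
    and z: "z \<in> V" "z \<bullet> m = s" "norm (radial_part m z) \<le> norm h"
  shows "z \<in> K"
proof -
  define l where "l = norm (radial_part m z) / norm h"
  have l: "0 \<le> l" "l \<le> 1" "l * norm h = norm (radial_part m z)"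
    using z(3) by (auto simp: l_def divide_le_eq_1)
  have "(1 - l) *\<^sub>R (s *\<^sub>R m) + l *\<^sub>R (s *\<^sub>R m + h) \<in> K"
    using convexD_alt[OF K revolution_invariant_axial_mem[OF K inv V m h p] p] l by blast
  moreover have "(1 - l) *\<^sub>R (s *\<^sub>R m) + l *\<^sub>R (s *\<^sub>R m + h) = s *\<^sub>R m + l *\<^sub>R h"
    by (simp add: algebra_simps)
  ultimately have "s *\<^sub>R m + l *\<^sub>R h \<in> K" by simp
  then show "z \<in> K"
  proof (rule revolution_invariantD[OF inv _ z(1)])
    have "l *\<^sub>R h \<bullet> m = 0" using h(2) by simp
    note lh = radial_part_axial_plus_orthogonal[OF m this, of s]
    show ax: "z \<bullet> m = (s *\<^sub>R m + l *\<^sub>R h) \<bullet> m" using z(2) lh(1) by simp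
    show "norm z = norm (s *\<^sub>R m + l *\<^sub>R h)"
      using norm_eq_iff_norm_radial_part_eq[OF m ax] lh(2) l(1,3) by simp
  qed
qed

lemma revolution_invariant_section:
  fixes K :: "'a::euclidean_space set" and s :: real
  assumes K: "compact K" "convex K" and inv: "revolution_invariant V m K"
    and V: "subspace V" "m \<in> V" and m: "norm m = 1"
  defines "A \<equiv> {y \<in> V. y \<bullet> m = s}"
  shows "K \<inter> A = {} \<or> (\<exists>r\<ge>0. K \<inter> A = cball (s *\<^sub>R m) r \<inter> A)"
proof (cases "K \<inter> A = {}")
  case False
  have dist_axis: "dist (s *\<^sub>R m) z = norm (radial_part m z)" if "z \<in> A" for z
    using that unfolding A_def by (intro dist_axis_point_eq_norm_radial_part) simp
  have "closed A"
    unfolding A_def using closed_subspace[OF V(1)] closed_hyperplane[of m s]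
    by (simp add: Collect_conj_eq closed_Int inner_commute)
  then have "compact (K \<inter> A)" using K(1) by (simp add: compact_Int_closed)
  from distance_attains_sup[OF this False, of "s *\<^sub>R m"]
  obtain y where y: "y \<in> K \<inter> A" and y_max: "\<And>z. z \<in> K \<inter> A \<Longrightarrow> dist (s *\<^sub>R m) z \<le> dist (s *\<^sub>R m) y"
    by blast
  define h where "h = radial_part m y"
  have ys: "y \<in> K" "y \<in> V" "y \<bullet> m = s" using y by (simp_all add: A_def)
  have h: "h \<in> V" "h \<bullet> m = 0"
    using radial_part_in_subspace[OF V ys(2)] radial_part_orthogonal[OF m] by (simp_all add: h_def)
  have p: "s *\<^sub>R m + h \<in> K" using ys axial_plus_radial_part[of y m] by (metis h_def)
  have "cball (s *\<^sub>R m) (norm h) \<inter> A \<subseteq> K"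
  proof
    fix z assume z: "z \<in> cball (s *\<^sub>R m) (norm h) \<inter> A"
    then have "z \<in> V" "z \<bullet> m = s" "norm (radial_part m z) \<le> norm h"
      using dist_axis[of z] by (simp_all add: A_def)
    then show "z \<in> K" by (rule revolution_invariant_disc_mem[OF K(2) inv V m h p])
  qed
  moreover have "dist (s *\<^sub>R m) y = norm h" using dist_axis y by (simp add: h_def)
  then have "K \<inter> A \<subseteq> cball (s *\<^sub>R m) (norm h)" using y_max by (simp add: subset_iff)
  ultimately have "K \<inter> A = cball (s *\<^sub>R m) (norm h) \<inter> A" by blast
  then show ?thesis by (intro disjI2 exI[of _ "norm h"]) simp
qed simp

lemma revolution_invariant_imp_sym_body_of_revolution_in:
  fixes K :: "'a::euclidean_space set"
  assumes K: "sym_convex_body_in V K" and inv: "revolution_invariant V m K"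
    and m: "m \<in> V" "norm m = 1"
  shows "sym_body_of_revolution_in V K (span {m})"
proof -
  have V: "subspace V" and cK: "compact K" "convex K"
    using K by (auto simp: sym_convex_body_in_def)
  have "span {m} \<subseteq> V" using V m by (simp add: span_minimal)
  moreover have "is_line (span {m})" using m by (intro is_line_span_singleton) auto
  moreover have "K \<inter> A = {} \<or> (\<exists>r\<ge>0. K \<inter> A = cball c r \<inter> A)"
    if "c \<in> span {m}" and A: "A = {y \<in> V. \<forall>w\<in>span {m}. (y - c) \<bullet> w = 0}" for c A
  proof -
    obtain s where c: "c = s *\<^sub>R m" using \<open>c \<in> span {m}\<close> by (auto simp: span_singleton)
    have "A = {y \<in> V. y \<bullet> m = s}" unfolding A c orthogonal_span_unit_iff[OF m(2)] ..
    then show ?thesis using revolution_invariant_section[OF cK inv V m] c by simp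
  qed
  ultimately show ?thesis using K unfolding sym_body_of_revolution_in_def Let_def by blast
qed

section \<open>A normal form for bodies of revolution\<close>

lemma revolution_invariant_equator:
  fixes K :: "'a::euclidean_space set"
  assumes K: "compact K" "convex K" "uminus ` K = K" and inv: "revolution_invariant V m K"
    and V: "subspace V" and ball: "V \<inter> ball 0 e \<subseteq> K" "e > 0"
  obtains b where "b > 0" "\<And>h. h \<in> V \<Longrightarrow> h \<bullet> m = 0 \<Longrightarrow> b *\<^sub>R h \<in> K \<longleftrightarrow> norm h \<le> 1"
proof (cases "\<exists>g\<in>V. g \<bullet> m = 0 \<and> norm g = 1")
  case True
  then obtain g where g: "g \<in> V" "g \<bullet> m = 0" "norm g = 1" by blast
  have "(e / 2) *\<^sub>R g \<in> V \<inter> ball 0 e" using g V ball(2) by (simp add: subspace_mul)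
  then have "(e / 2) *\<^sub>R g \<in> K" using ball(1) by blast
  moreover have "g \<noteq> 0" "e / 2 > 0" using g ball(2) by auto
  ultimately obtain b where b: "b > 0" "\<And>t. (t * b) *\<^sub>R g \<in> K \<longleftrightarrow> \<bar>t\<bar> \<le> 1"
    using compact_convex_symmetric_ray[OF K] by metis
  have "b *\<^sub>R h \<in> K \<longleftrightarrow> norm h \<le> 1" if h: "h \<in> V" "h \<bullet> m = 0" for h
  proof -
    have V_mem: "b *\<^sub>R h \<in> V" "(norm h * b) *\<^sub>R g \<in> V" using g h V by (simp_all add: subspace_mul)
    have axial: "(norm h * b) *\<^sub>R g \<bullet> m = (b *\<^sub>R h) \<bullet> m" using g h by simp
    have norm: "norm ((norm h * b) *\<^sub>R g) = norm (b *\<^sub>R h)" using g b(1) by simp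
    have "b *\<^sub>R h \<in> K \<longleftrightarrow> (norm h * b) *\<^sub>R g \<in> K"
      using revolution_invariantD[OF inv _ V_mem(2) axial norm]
        revolution_invariantD[OF inv _ V_mem(1) axial[symmetric] norm[symmetric]] by blast
    then show ?thesis using b(2)[of "norm h"] by simp
  qed
  then show ?thesis using that b(1) by blast
next
  case False
  have "h = 0" if "h \<in> V" "h \<bullet> m = 0" for h
  proof (rule ccontr)
    assume "h \<noteq> 0"
    then have "(1 / norm h) *\<^sub>R h \<in> V" "(1 / norm h) *\<^sub>R h \<bullet> m = 0" "norm ((1 / norm h) *\<^sub>R h) = 1"
      using that V by (simp_all add: subspace_mul)
    then show False using False by blast
  qed
  moreover have "0 \<in> K" using ball subspace_0[OF V] by auto
  ultimately show ?thesis using that[of 1] by force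
qed

definition axial_stretch :: "real \<Rightarrow> real \<Rightarrow> 'a::real_inner \<Rightarrow> 'a \<Rightarrow> 'a" where
  "axial_stretch a b m y = (a * (y \<bullet> m)) *\<^sub>R m + b *\<^sub>R radial_part m y"

lemma linear_axial_stretch: "linear (axial_stretch a b m)"
  unfolding linear_iff axial_stretch_def radial_part_def
  by (simp add: inner_add_left algebra_simps)

lemma axial_stretch_in_subspace:
  "subspace V \<Longrightarrow> m \<in> V \<Longrightarrow> y \<in> V \<Longrightarrow> axial_stretch a b m y \<in> V"
  unfolding axial_stretch_def
  by (intro subspace_add subspace_mul radial_part_in_subspace)

lemma
  assumes "norm m = 1"
  shows inner_axial_stretch: "axial_stretch a b m y \<bullet> m = a * (y \<bullet> m)"
    and radial_part_axial_stretch: "radial_part m (axial_stretch a b m y) = b *\<^sub>R radial_part m y"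
    and axial_stretch_axis: "axial_stretch a b m m = a *\<^sub>R m"
  using radial_part_axial_plus_orthogonal[OF assms, of "b *\<^sub>R radial_part m y" "a * (y \<bullet> m)"]
    radial_part_orthogonal[OF assms, of y] assms
  by (simp_all add: axial_stretch_def radial_part_def norm_eq_1)

lemma axial_stretch_ball_subset:
  fixes K :: "'a::euclidean_space set"
  assumes K: "convex K" and V: "subspace V" "m \<in> V" and m: "norm m = 1"
    and a: "\<And>t. (t * a) *\<^sub>R m \<in> K \<longleftrightarrow> \<bar>t\<bar> \<le> 1"
    and b: "\<And>h. h \<in> V \<Longrightarrow> h \<bullet> m = 0 \<Longrightarrow> b *\<^sub>R h \<in> K \<longleftrightarrow> norm h \<le> 1"
  shows "V \<inter> cball 0 (1/2) \<subseteq> axial_stretch a b m -` K"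
proof
  fix y assume y: "y \<in> V \<inter> cball 0 (1/2)"
  have "\<bar>2 * (y \<bullet> m)\<bar> \<le> 1"
    using Cauchy_Schwarz_ineq2[of y m] m y by (simp add: abs_mult)
  then have "(2 * (y \<bullet> m) * a) *\<^sub>R m \<in> K" using a by blast
  moreover have "2 *\<^sub>R radial_part m y \<in> V" "2 *\<^sub>R radial_part m y \<bullet> m = 0"
    using radial_part_in_subspace[OF V] y subspace_mul[OF V(1)] radial_part_orthogonal[OF m] by auto
  moreover have "norm (2 *\<^sub>R radial_part m y) \<le> 1" using norm_radial_part_le[OF m, of y] y by simp
  ultimately have "midpoint ((2 * (y \<bullet> m) * a) *\<^sub>R m) (b *\<^sub>R (2 *\<^sub>R radial_part m y)) \<in> K"
    using b by (blast intro: convex_midpoint_mem[OF K])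
  moreover have "midpoint ((2 * (y \<bullet> m) * a) *\<^sub>R m) (b *\<^sub>R (2 *\<^sub>R radial_part m y))
      = axial_stretch a b m y"
    by (simp add: midpoint_def axial_stretch_def algebra_simps)
  ultimately show "y \<in> axial_stretch a b m -` K" by simp
qed

lemma axial_stretch_preimage_bounded:
  fixes K :: "'a::euclidean_space set"
  assumes K: "convex K" "uminus ` K = K" and inv: "revolution_invariant V m K"
    and V: "subspace V" "m \<in> V" and m: "norm m = 1"
    and a: "\<And>t. (t * a) *\<^sub>R m \<in> K \<longleftrightarrow> \<bar>t\<bar> \<le> 1"
    and b: "\<And>h. h \<in> V \<Longrightarrow> h \<bullet> m = 0 \<Longrightarrow> b *\<^sub>R h \<in> K \<longleftrightarrow> norm h \<le> 1"
  shows "V \<inter> axial_stretch a b m -` K \<subseteq> cball 0 2"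
proof
  fix y assume y: "y \<in> V \<inter> axial_stretch a b m -` K"
  have rad: "radial_part m y \<in> V" "radial_part m y \<bullet> m = 0"
    using y radial_part_in_subspace[OF V] radial_part_orthogonal[OF m] by auto
  then have h: "b *\<^sub>R radial_part m y \<in> V" "b *\<^sub>R radial_part m y \<bullet> m = 0"
    using V(1) by (simp_all add: subspace_mul)
  have p: "(y \<bullet> m * a) *\<^sub>R m + b *\<^sub>R radial_part m y \<in> K"
    using y by (simp add: axial_stretch_def mult.commute)
  have "\<bar>y \<bullet> m\<bar> \<le> 1"
    using revolution_invariant_axial_mem[OF K(1) inv V m h p] a by blast
  moreover have "norm (radial_part m y) \<le> 1"
    using revolution_invariant_orthogonal_mem[OF K inv V m h p] b rad by blast
  moreover have "norm y \<le> \<bar>y \<bullet> m\<bar> + norm (radial_part m y)"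
    using norm_triangle_ineq[of "(y \<bullet> m) *\<^sub>R m" "radial_part m y"] m by simp
  ultimately show "y \<in> cball 0 2" by simp
qed

lemma revolution_invariant_axial_stretch:
  fixes K :: "'a::euclidean_space set"
  assumes inv: "revolution_invariant V m K" and V: "subspace V" "m \<in> V" and m: "norm m = 1"
  shows "revolution_invariant V m (V \<inter> axial_stretch a b m -` K)"
  unfolding revolution_invariant_def
proof (intro ballI impI)
  fix y z assume y: "y \<in> V \<inter> axial_stretch a b m -` K" and z: "z \<in> V"
    and yz: "z \<bullet> m = y \<bullet> m \<and> norm z = norm y"
  have ax: "axial_stretch a b m z \<bullet> m = axial_stretch a b m y \<bullet> m"
    using yz by (simp add: inner_axial_stretch[OF m])
  have "norm (radial_part m z) = norm (radial_part m y)"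
    using norm_eq_iff_norm_radial_part_eq[OF m, of z y] yz by simp
  then have "norm (axial_stretch a b m z) = norm (axial_stretch a b m y)"
    using norm_eq_iff_norm_radial_part_eq[OF m ax] by (simp add: radial_part_axial_stretch[OF m])
  then have "axial_stretch a b m z \<in> K"
    using revolution_invariantD[OF inv _ axial_stretch_in_subspace[OF V z] ax] y by blast
  then show "z \<in> V \<inter> axial_stretch a b m -` K" using z by simp
qed

lemma revolution_body_normal_form:
  fixes K :: "'a::euclidean_space set"
  assumes K: "compact K" "convex K" "uminus ` K = K" and inv: "revolution_invariant V m K"
    and V: "subspace V" "m \<in> V" and m: "norm m = 1" and ball: "V \<inter> ball 0 e \<subseteq> K" "e > 0"
  obtains a b where "a > 0"
    "V \<inter> cball 0 (1/2) \<subseteq> axial_stretch a b m -` K"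
    "V \<inter> axial_stretch a b m -` K \<subseteq> cball 0 2"
    "revolution_invariant V m (V \<inter> axial_stretch a b m -` K)"
proof -
  have "(e / 2) *\<^sub>R m \<in> V \<inter> ball 0 e" using V m ball(2) by (simp add: subspace_mul)
  then have "(e / 2) *\<^sub>R m \<in> K" using ball(1) by blast
  moreover have "m \<noteq> 0" "e / 2 > 0" using m ball(2) by auto
  ultimately obtain a where a: "a > 0" "\<And>t. (t * a) *\<^sub>R m \<in> K \<longleftrightarrow> \<bar>t\<bar> \<le> 1"
    using compact_convex_symmetric_ray[OF K] by metis
  obtain b where b: "\<And>h. h \<in> V \<Longrightarrow> h \<bullet> m = 0 \<Longrightarrow> b *\<^sub>R h \<in> K \<longleftrightarrow> norm h \<le> 1"
    using revolution_invariant_equator[OF K inv V(1) ball] by blast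
  show ?thesis
    using that[OF a(1) axial_stretch_ball_subset[OF K(2) V m a(2) b]
        axial_stretch_preimage_bounded[OF K(2,3) inv V m a(2) b]
        revolution_invariant_axial_stretch[OF inv V m]] .
qed

section \<open>Normalising frames of sections\<close>

text \<open>The fixed radii \<open>1/2\<close> and \<open>2\<close> are what make sequences of frames compact.\<close>
definition revolution_frame ::
    "'a::euclidean_space set \<Rightarrow> 'a set \<Rightarrow> ('a \<Rightarrow> 'a) \<Rightarrow> 'a \<Rightarrow> 'a set \<Rightarrow> bool" where
  "revolution_frame V B N m L \<longleftrightarrow> linear N \<and> N ` V \<subseteq> V \<and> m \<in> V \<and> norm m = 1 \<and> N m \<in> L \<and>
     V \<inter> cball 0 (1/2) \<subseteq> N -` B \<and> V \<inter> N -` B \<subseteq> cball 0 2 \<and>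
     revolution_invariant V m (V \<inter> N -` B)"

lemma affine_sym_body_of_revolution_in_preimage:
  fixes B :: "'a::euclidean_space set"
  assumes aff: "affine_sym_body_of_revolution_in V (V \<inter> B) L"
  obtains T m where "linear T" "T ` V = V" "m \<in> V" "norm m = 1" "T ` span {m} = L"
    "sym_convex_body_in V (V \<inter> T -` B)" "revolution_invariant V m (V \<inter> T -` B)"
proof -
  obtain T K L0 where T: "linear T" "inj_on T V" "T ` V = V"
    and rev: "sym_body_of_revolution_in V K L0" and KB: "V \<inter> B = T ` K" and L: "L = T ` L0"
    using aff unfolding affine_sym_body_of_revolution_in_def by blast
  have K: "sym_convex_body_in V K" "K \<subseteq> V" and L0: "is_line L0" "L0 \<subseteq> V"
    using rev unfolding sym_body_of_revolution_in_def sym_convex_body_in_def by auto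
  obtain m where m: "norm m = 1" "m \<in> L0" "L0 = span {m}"
    using is_line_unit_generator[OF L0(1)] by blast
  have "K = V \<inter> T -` B"
  proof
    show "K \<subseteq> V \<inter> T -` B" using KB K(2) by blast
    show "V \<inter> T -` B \<subseteq> K"
    proof
      fix w assume w: "w \<in> V \<inter> T -` B"
      then obtain k where "k \<in> K" "T w = T k" using KB T(3) by blast
      then show "w \<in> K" using inj_onD[OF T(2)] K(2) w by blast
    qed
  qed
  moreover have "revolution_invariant V m K"
    using sym_body_of_revolution_in_imp_invariant rev m by simp
  ultimately show ?thesis using that T(1,3) m L0(2) L K(1) by blast
qed

lemma affine_sym_body_of_revolution_in_imp_frame:
  fixes B :: "'a::euclidean_space set"
  assumes V: "subspace V" and B: "ball 0 \<rho> \<subseteq> B" "\<rho> > 0"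
    and aff: "affine_sym_body_of_revolution_in V (V \<inter> B) L"
  obtains N m where "revolution_frame V B N m L"
proof -
  obtain T m where T: "linear T" "T ` V = V" and m: "m \<in> V" "norm m = 1" and L: "T ` span {m} = L"
    and K: "sym_convex_body_in V (V \<inter> T -` B)" and inv: "revolution_invariant V m (V \<inter> T -` B)"
    using affine_sym_body_of_revolution_in_preimage[OF aff] by blast
  have K': "compact (V \<inter> T -` B)" "convex (V \<inter> T -` B)" "uminus ` (V \<inter> T -` B) = V \<inter> T -` B"
    using K by (simp_all add: sym_convex_body_in_def)
  obtain C where C: "C > 0" "\<And>x. norm (T x) \<le> C * norm x"
    using linear_bounded_pos[OF T(1)] by blast
  have "V \<inter> ball 0 (\<rho> / C) \<subseteq> V \<inter> T -` B"
  proof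
    fix w assume w: "w \<in> V \<inter> ball 0 (\<rho> / C)"
    then have "C * norm w < \<rho>" using C(1) by (simp add: pos_less_divide_eq mult.commute)
    then show "w \<in> V \<inter> T -` B" using C(2)[of w] B(1) w by force
  qed
  moreover have "\<rho> / C > 0" using B(2) C(1) by simp
  ultimately obtain a b where a: "a > 0"
    and D: "V \<inter> cball 0 (1/2) \<subseteq> axial_stretch a b m -` (V \<inter> T -` B)"
      "V \<inter> axial_stretch a b m -` (V \<inter> T -` B) \<subseteq> cball 0 2"
      "revolution_invariant V m (V \<inter> axial_stretch a b m -` (V \<inter> T -` B))"
    using revolution_body_normal_form[OF K' inv V m] by metis
  define N where "N = T \<circ> axial_stretch a b m"
  have pre: "V \<inter> N -` B = V \<inter> axial_stretch a b m -` (V \<inter> T -` B)"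
    using axial_stretch_in_subspace[OF V m(1)] by (auto simp: N_def)
  have "N m \<in> L"
    using axial_stretch_axis[OF m(2)] L by (auto simp: N_def span_base span_mul)
  moreover have "linear N" using linear_compose[OF linear_axial_stretch T(1)] by (simp add: N_def)
  moreover have "N ` V \<subseteq> V" using axial_stretch_in_subspace[OF V m(1)] T(2) by (auto simp: N_def)
  moreover have "V \<inter> cball 0 (1/2) \<subseteq> N -` B" using D(1) pre by blast
  ultimately have "revolution_frame V B N m L"
    unfolding revolution_frame_def pre using m D(2,3) by blast
  then show ?thesis using that by blast
qed

lemma revolution_frame_cong:
  assumes frame: "revolution_frame V B N m L" and "linear N'"
    and eq: "\<And>y. y \<in> V \<Longrightarrow> N' y = N y"
  shows "revolution_frame V B N' m L"
proof -
  have N: "N ` V \<subseteq> V" "m \<in> V" "N m \<in> L" "V \<inter> cball 0 (1/2) \<subseteq> N -` B"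
    using frame by (simp_all add: revolution_frame_def)
  have pre: "V \<inter> N' -` B = V \<inter> N -` B" using eq by auto
  have "N' ` V \<subseteq> V" "N' m \<in> L" "V \<inter> cball 0 (1/2) \<subseteq> N' -` B" using N eq by auto
  then show ?thesis using frame \<open>linear N'\<close> unfolding revolution_frame_def pre by blast
qed

lemma revolution_frame_norm_le:
  assumes frame: "revolution_frame V B N m L" and V: "subspace V" and B: "B \<subseteq> cball 0 R"
    and y: "y \<in> V"
  shows "norm (N y) \<le> 2 * R * norm y"
proof (cases "y = 0")
  case True
  then show ?thesis using frame linear_0[of N] by (simp add: revolution_frame_def)
next
  case False
  define c where "c = 1 / (2 * norm y)"
  have "c *\<^sub>R y \<in> V \<inter> cball 0 (1/2)" using y V False by (simp add: c_def subspace_mul)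
  moreover have "V \<inter> cball 0 (1/2) \<subseteq> N -` B" using frame by (simp add: revolution_frame_def)
  ultimately have "N (c *\<^sub>R y) \<in> cball 0 R" using B by blast
  moreover have "N (c *\<^sub>R y) = c *\<^sub>R N y" using frame by (simp add: revolution_frame_def linear_scale)
  ultimately have "c * norm (N y) \<le> R" using False by (simp add: c_def)
  then show ?thesis using False by (simp add: c_def field_simps)
qed

lemma linear_inj_on_subspace_image_eq:
  fixes f :: "'a::euclidean_space \<Rightarrow> 'a"
  assumes f: "linear f" "inj_on f V" "f ` V \<subseteq> V" and V: "subspace V"
  shows "f ` V = V"
proof (rule subspace_dim_equal)
  show "subspace (f ` V)" using linear_subspace_image[OF f(1) V] .
  have "inj_on f (span V)" using f(2) unfolding span_eq_iff[THEN iffD2, OF V] .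
  then show "dim V \<le> dim (f ` V)" using dim_image_eq[OF f(1)] by simp
qed (use f(3) V in auto)

lemma revolution_frame_zero_mem: "revolution_frame V B N m L \<Longrightarrow> subspace V \<Longrightarrow> 0 \<in> B"
  using linear_0[of N] subspace_0[of V] by (force simp: revolution_frame_def)

lemma revolution_frame_inj_on:
  assumes frame: "revolution_frame V B N m L" and V: "subspace V"
  shows "inj_on N V"
proof -
  have lin: "linear N" using frame by (simp add: revolution_frame_def)
  have "y = 0" if y: "y \<in> V" "N y = 0" for y
  proof (rule ccontr)
    assume "y \<noteq> 0"
    define z where "z = (3 / norm y) *\<^sub>R y"
    have "N z = 0" using y lin by (simp add: z_def linear_scale)
    then have "z \<in> V \<inter> N -` B"
      using y(1) V revolution_frame_zero_mem[OF frame V] by (simp add: z_def subspace_mul)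
    then have "norm z \<le> 2" using frame by (auto simp: revolution_frame_def)
    moreover have "norm z = 3" using \<open>y \<noteq> 0\<close> by (simp add: z_def)
    ultimately show False by simp
  qed
  then show ?thesis using linear_inj_on_iff_eq_0[OF lin V] by blast
qed

lemma revolution_frame_sym_convex_body_in:
  fixes B :: "'a::euclidean_space set"
  assumes frame: "revolution_frame V B N m L" and V: "subspace V"
    and B: "closed B" "convex B" "uminus ` B = B"
  shows "sym_convex_body_in V (V \<inter> N -` B)"
proof -
  have lin: "linear N" and ball: "V \<inter> cball 0 (1/2) \<subseteq> N -` B" and bd: "V \<inter> N -` B \<subseteq> cball 0 2"
    using frame by (simp_all add: revolution_frame_def)
  have "closed (N -` B)"
    using continuous_closed_vimage[OF B(1)]
      linear_continuous_at[OF linear_conv_bounded_linear[THEN iffD1, OF lin]]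
    by blast
  then have "compact (V \<inter> N -` B)"
    using closed_subspace[OF V] bounded_subset[OF bounded_cball bd]
    by (simp add: compact_eq_bounded_closed closed_Int)
  moreover have "convex (V \<inter> N -` B)"
    using convex_linear_vimage[OF lin B(2)] subspace_imp_convex[OF V] by (simp add: convex_Int)
  moreover have "aff_dim (V \<inter> N -` B) = int (dim V)"
  proof (rule antisym)
    show "aff_dim (V \<inter> N -` B) \<le> int (dim V)"
      using aff_dim_subset[of "V \<inter> N -` B" V] aff_dim_subspace[OF V] by simp
    have "aff_dim (V \<inter> ball 0 (1/2)) = aff_dim V"
      using aff_dim_convex_Int_open[OF subspace_imp_convex[OF V] open_ball] subspace_0[OF V]
      by force
    moreover have "V \<inter> ball 0 (1/2) \<subseteq> V \<inter> N -` B" using ball by auto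
    ultimately show "int (dim V) \<le> aff_dim (V \<inter> N -` B)"
      using aff_dim_subset aff_dim_subspace[OF V] by metis
  qed
  moreover have "- y \<in> V \<inter> N -` B" if "y \<in> V \<inter> N -` B" for y
    using that B(3) V lin by (force simp: linear_neg subspace_neg)
  then have "uminus ` (V \<inter> N -` B) = V \<inter> N -` B" by (metis (no_types, lifting) image_subsetI
      minus_minus subsetI subset_antisym image_eqI)
  ultimately show ?thesis using V unfolding sym_convex_body_in_def by blast
qed

lemma revolution_frame_imp_affine_sym_body_of_revolution_in:
  fixes B :: "'a::euclidean_space set"
  assumes frame: "revolution_frame V B N m L" and V: "subspace V" and L: "is_line L"
    and B: "closed B" "convex B" "uminus ` B = B"
  shows "affine_sym_body_of_revolution_in V (V \<inter> B) L"
proof -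
  have N: "linear N" "N ` V \<subseteq> V" "N m \<in> L" and m: "m \<in> V" "norm m = 1"
    and inv: "revolution_invariant V m (V \<inter> N -` B)"
    using frame by (simp_all add: revolution_frame_def)
  have inj: "inj_on N V" using revolution_frame_inj_on[OF frame V] .
  have surj: "N ` V = V" using linear_inj_on_subspace_image_eq[OF N(1) inj N(2) V] .
  have "sym_body_of_revolution_in V (V \<inter> N -` B) (span {m})"
    using revolution_invariant_imp_sym_body_of_revolution_in
      [OF revolution_frame_sym_convex_body_in[OF frame V B] inv m] .
  moreover have "V \<inter> B = N ` (V \<inter> N -` B)"
  proof
    show "V \<inter> B \<subseteq> N ` (V \<inter> N -` B)"
    proof
      fix w assume w: "w \<in> V \<inter> B"
      then obtain y where "y \<in> V" "w = N y" using surj by (metis IntD1 imageE)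
      then show "w \<in> N ` (V \<inter> N -` B)" using w by blast
    qed
  qed (use N(2) in blast)
  moreover have "N m \<noteq> 0" using inj m linear_0[OF N(1)] subspace_0[OF V]
    by (metis inj_onD norm_zero zero_neq_one)
  then have "L = N ` span {m}"
    using is_line_eq_span[OF L N(3)] span_linear_image[OF N(1), of "{m}"] by simp
  ultimately show ?thesis
    unfolding affine_sym_body_of_revolution_in_def using N(1) inj surj by blast
qed

section \<open>Convergence in the projective space\<close>

lemma RP_lines_is_line: "L \<in> RP_lines \<Longrightarrow> is_line L"
  unfolding RP_lines_def by (auto intro: is_line_span_singleton)

lemma dist_unit_sq:
  fixes u v :: "'a::real_inner"
  assumes "norm v = 1" "norm u = 1"
  shows "(dist v u)\<^sup>2 = 2 - 2 * (v \<bullet> u)"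
  using assms unfolding dist_norm power2_norm_eq_inner
  by (simp add: inner_diff_left inner_diff_right inner_commute norm_eq_1)

lemma dist_sign_aligned_le:
  fixes u v :: "'a::real_inner"
  assumes v: "norm v = 1" and u: "norm u = 1"
  defines "w \<equiv> if 0 \<le> v \<bullet> u then v else - v"
  shows "dist w u \<le> dist v u" "dist w u \<le> dist v (- u)"
proof -
  have sq: "(dist v u)\<^sup>2 = 2 - 2 * (v \<bullet> u)" "(dist v (- u))\<^sup>2 = 2 + 2 * (v \<bullet> u)"
    using dist_unit_sq[OF v u] dist_unit_sq[of v "- u"] v u by simp_all
  have neg: "dist (- v) u = dist v (- u)" using dist_minus[of v "- u"] by simp
  have "dist w u \<le> dist v u \<and> dist w u \<le> dist v (- u)"
  proof (cases "0 \<le> v \<bullet> u")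
    case True
    then have "(dist v u)\<^sup>2 \<le> (dist v (- u))\<^sup>2" using sq by simp
    then have "dist v u \<le> dist v (- u)" by (rule power2_le_imp_le) simp
    then show ?thesis using True by (simp add: w_def)
  next
    case False
    then have "(dist v (- u))\<^sup>2 \<le> (dist v u)\<^sup>2" using sq by simp
    then have "dist v (- u) \<le> dist v u" by (rule power2_le_imp_le) simp
    then show ?thesis using False neg by (simp add: w_def)
  qed
  then show "dist w u \<le> dist v u" "dist w u \<le> dist v (- u)" by simp_all
qed

lemma RP_preimage_cap:
  fixes u :: "'a::euclidean_space"
  shows "{w \<in> sphere 0 1. span {w} \<in> {span {w'} | w'. w' \<in> sphere 0 1 \<inter> ball u e}}
    = sphere 0 1 \<inter> (ball u e \<union> ball (- u) e)"
proof (intro equalityI subsetI)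
  fix w assume "w \<in> {w \<in> sphere 0 1. span {w} \<in> {span {w'} | w'. w' \<in> sphere 0 1 \<inter> ball u e}}"
  then obtain w' where w: "norm w = 1" and w': "norm w' = 1" "dist u w' < e" "span {w} = span {w'}"
    by auto
  then have "w = w' \<or> w = - w'" using unit_span_singleton_eq by blast
  moreover have "dist (- u) (- w') = dist u w'" by (rule dist_minus)
  ultimately show "w \<in> sphere 0 1 \<inter> (ball u e \<union> ball (- u) e)" using w w' by auto
next
  fix w assume w: "w \<in> sphere 0 1 \<inter> (ball u e \<union> ball (- u) e)"
  have "dist u (- w) = dist (- u) w" using dist_minus[of u "- w"] by simp
  then have "w \<in> ball u e \<or> - w \<in> ball u e" using w by auto
  moreover have "- w \<in> sphere 0 1" using w by simp
  ultimately have "span {w} \<in> {span {w'} | w'. w' \<in> sphere 0 1 \<inter> ball u e}"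
    using w span_singleton_uminus[of w] by blast
  then show "w \<in> {w \<in> sphere 0 1. span {w} \<in> {span {w'} | w'. w' \<in> sphere 0 1 \<inter> ball u e}}"
    using w by blast
qed

lemma openin_RP_topology_cap:
  fixes u :: "'a::euclidean_space"
  shows "openin RP_topology {span {w} | w. w \<in> sphere 0 1 \<inter> ball u e}"
  unfolding openin_RP_topology RP_preimage_cap
  by (auto simp: RP_lines_def intro!: openin_open_Int open_Un)

lemma limitin_RP_topology_unit_representatives:
  fixes Ls :: "nat \<Rightarrow> 'a::euclidean_space set"
  assumes Ls: "\<And>i. Ls i \<in> RP_lines" and L: "L \<in> RP_lines"
    and lim: "limitin RP_topology Ls L sequentially"
  obtains u us where "norm u = 1" "L = span {u}" "\<And>i. norm (us i) = 1" "\<And>i. Ls i = span {us i}"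
    "us \<longlonglongrightarrow> u"
proof -
  obtain u where u: "norm u = 1" "L = span {u}" using L unfolding RP_lines_def by auto
  have "\<forall>i. \<exists>v. norm v = 1 \<and> Ls i = span {v}" using Ls unfolding RP_lines_def by auto
  then obtain v where v: "\<And>i. norm (v i) = 1" "\<And>i. Ls i = span {v i}" by metis
  define us where "us i = (if 0 \<le> v i \<bullet> u then v i else - v i)" for i
  have us: "norm (us i) = 1" "Ls i = span {us i}" for i
    using v span_singleton_uminus[of "v i"] by (simp_all add: us_def)
  have "us \<longlonglongrightarrow> u"
  proof (rule tendstoI)
    fix e :: real assume "e > 0"
    then have "L \<in> {span {w} | w. w \<in> sphere 0 1 \<inter> ball u e}" using u by auto
    then have "eventually (\<lambda>i. Ls i \<in> {span {w} | w. w \<in> sphere 0 1 \<inter> ball u e}) sequentially"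
      using limitinD[OF lim openin_RP_topology_cap] by blast
    then show "eventually (\<lambda>i. dist (us i) u < e) sequentially"
    proof (rule eventually_mono)
      fix i assume "Ls i \<in> {span {w} | w. w \<in> sphere 0 1 \<inter> ball u e}"
      then have "v i \<in> {w \<in> sphere 0 1. span {w} \<in> {span {w'} | w'. w' \<in> sphere 0 1 \<inter> ball u e}}"
        using v by simp
      then have "dist (v i) u < e \<or> dist (v i) (- u) < e"
        unfolding RP_preimage_cap by (auto simp: dist_commute)
      moreover have "dist (us i) u \<le> dist (v i) u" "dist (us i) u \<le> dist (v i) (- u)"
        using dist_sign_aligned_le[OF v(1) u(1)] by (simp_all add: us_def)
      ultimately show "dist (us i) u < e" by linarith
    qed
  qed
  then show ?thesis using that u us by blast
qed

section \<open>Limits of frames\<close>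

text \<open>The point with the axial coordinate and the norm of \<open>y\<close> in the half-plane spanned by the axis
  and \<open>w\<close> (the foot of \<open>y\<close> on the axis if \<open>w\<close> lies on the axis).\<close>
definition rotate_towards :: "'a::real_inner \<Rightarrow> 'a \<Rightarrow> 'a \<Rightarrow> 'a" where
  "rotate_towards m y w =
     (y \<bullet> m) *\<^sub>R m + (norm (radial_part m y) / norm (radial_part m w)) *\<^sub>R radial_part m w"

lemma
  assumes m: "norm m = 1"
  shows inner_rotate_towards: "rotate_towards m y w \<bullet> m = y \<bullet> m"
    and norm_rotate_towards: "radial_part m w \<noteq> 0 \<Longrightarrow> norm (rotate_towards m y w) = norm y"
proof -
  have "(norm (radial_part m y) / norm (radial_part m w)) *\<^sub>R radial_part m w \<bullet> m = 0"
    using radial_part_orthogonal[OF m] by simp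
  note rad = radial_part_axial_plus_orthogonal[OF m this, of "y \<bullet> m"]
  show ax: "rotate_towards m y w \<bullet> m = y \<bullet> m" using rad(1) by (simp add: rotate_towards_def)
  assume "radial_part m w \<noteq> 0"
  then have "norm (radial_part m (rotate_towards m y w)) = norm (radial_part m y)"
    using rad(2) by (simp add: rotate_towards_def)
  then show "norm (rotate_towards m y w) = norm y" using norm_eq_iff_norm_radial_part_eq[OF m ax]
    by simp
qed

lemma rotate_towards_in_subspace:
  "subspace V \<Longrightarrow> m \<in> V \<Longrightarrow> w \<in> V \<Longrightarrow> rotate_towards m y w \<in> V"
  unfolding rotate_towards_def by (intro subspace_add subspace_mul radial_part_in_subspace)

lemma rotate_towards_self:
  assumes m: "norm m = 1" and yz: "z \<bullet> m = y \<bullet> m" "norm z = norm y"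
  shows "rotate_towards m y z = z"
proof (cases "radial_part m z = 0")
  case True
  then have "radial_part m y = 0" using norm_eq_iff_norm_radial_part_eq[OF m yz(1)] yz(2) by simp
  then show ?thesis using True yz(1) axial_plus_radial_part[of z m]
    by (simp add: rotate_towards_def)
next
  case False
  moreover have "norm (radial_part m z) = norm (radial_part m y)"
    using norm_eq_iff_norm_radial_part_eq[OF m yz(1)] yz(2) by simp
  ultimately have q: "norm (radial_part m y) / norm (radial_part m z) = 1"
    by (metis divide_self norm_eq_zero)
  have "rotate_towards m y z = (z \<bullet> m) *\<^sub>R m + radial_part m z"
    unfolding rotate_towards_def q using yz(1) by simp
  then show ?thesis by simp
qed

lemma tendsto_rotate_towards:
  assumes "ms \<longlonglongrightarrow> m" "ys \<longlonglongrightarrow> y" "ws \<longlonglongrightarrow> w" "radial_part m w \<noteq> 0"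
  shows "(\<lambda>j. rotate_towards (ms j) (ys j) (ws j)) \<longlonglongrightarrow> rotate_towards m y w"
  using assms unfolding rotate_towards_def radial_part_def by (intro tendsto_intros) auto

locale converging_frames =
  fixes B :: "'a::euclidean_space set" and xs :: "nat \<Rightarrow> 'a" and x :: 'a
    and F :: "nat \<Rightarrow> 'a \<Rightarrow>\<^sub>L 'a" and F0 :: "'a \<Rightarrow>\<^sub>L 'a"
    and ms :: "nat \<Rightarrow> 'a" and m :: 'a and us :: "nat \<Rightarrow> 'a" and u :: 'a
  assumes closed_B: "closed B" and convex_B: "convex B" and zero_interior_B: "0 \<in> interior B"
    and xs_unit: "\<And>j. norm (xs j) = 1" and xs_lim: "xs \<longlonglongrightarrow> x"
    and F_lim: "F \<longlonglongrightarrow> F0" and ms_lim: "ms \<longlonglongrightarrow> m" and us_lim: "us \<longlonglongrightarrow> u"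
    and us_unit: "\<And>j. norm (us j) = 1"
    and frames: "\<And>j. revolution_frame {y. xs j \<bullet> y = 0} B (F j) (ms j) (span {us j})"
begin

lemma tendsto_apply: "g \<longlonglongrightarrow> g0 \<Longrightarrow> (\<lambda>j. F j (g j)) \<longlonglongrightarrow> F0 g0"
  using bounded_bilinear.tendsto[OF bounded_bilinear_blinfun_apply F_lim] .

lemma radial_part_xs_mem: "radial_part (xs j) y \<in> {y. xs j \<bullet> y = 0}"
  using radial_part_orthogonal[OF xs_unit] by (simp add: inner_commute)

lemma tendsto_radial_part_xs:
  assumes "y \<in> {y. x \<bullet> y = 0}"
  shows "(\<lambda>j. radial_part (xs j) y) \<longlonglongrightarrow> y"
proof -
  have "(\<lambda>j. radial_part (xs j) y) \<longlonglongrightarrow> radial_part x y"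
    unfolding radial_part_def using xs_lim by (intro tendsto_intros)
  then show ?thesis using assms by (simp add: radial_part_def inner_commute)
qed

lemma frame_apply_mem:
  assumes "y \<in> {y. xs j \<bullet> y = 0}"
  shows "F j y \<in> {y. xs j \<bullet> y = 0}"
  using frames[of j] assms by (auto simp: revolution_frame_def)

lemma frame_ball: "y \<in> {y. xs j \<bullet> y = 0} \<Longrightarrow> norm y \<le> 1/2 \<Longrightarrow> F j y \<in> B"
  using frames[of j] by (auto simp: revolution_frame_def)

lemma frame_bounded: "y \<in> {y. xs j \<bullet> y = 0} \<Longrightarrow> F j y \<in> B \<Longrightarrow> norm y \<le> 2"
  using frames[of j] by (auto simp: revolution_frame_def)

lemma limit_of_zero_inner:
  assumes "a \<longlonglongrightarrow> a0" "b \<longlonglongrightarrow> b0" "\<And>j. a j \<bullet> b j = 0"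
  shows "a0 \<bullet> b0 = 0"
  using LIMSEQ_unique[OF tendsto_inner[OF assms(1,2)]] assms(3) by simp

lemma m_unit: "norm m = 1"
  using LIMSEQ_unique[OF tendsto_norm[OF ms_lim]] frames by (simp add: revolution_frame_def)

lemma m_mem: "m \<in> {y. x \<bullet> y = 0}"
  using limit_of_zero_inner[OF xs_lim ms_lim] frames by (simp add: revolution_frame_def)

lemma F0_image: "F0 ` {y. x \<bullet> y = 0} \<subseteq> {y. x \<bullet> y = 0}"
proof
  fix w assume "w \<in> F0 ` {y. x \<bullet> y = 0}"
  then obtain y where y: "y \<in> {y. x \<bullet> y = 0}" "w = F0 y" by blast
  show "w \<in> {y. x \<bullet> y = 0}"
    using limit_of_zero_inner[OF xs_lim tendsto_apply[OF tendsto_radial_part_xs[OF y(1)]]]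
      frame_apply_mem[OF radial_part_xs_mem] y(2) by simp
qed

lemma F0_axis: "F0 m \<in> span {u}"
proof -
  have "(\<lambda>j. F j (ms j)) = (\<lambda>j. (F j (ms j) \<bullet> us j) *\<^sub>R us j)"
  proof
    fix j
    obtain k where "F j (ms j) = k *\<^sub>R us j"
      using frames[of j] by (auto simp: revolution_frame_def span_singleton)
    then show "F j (ms j) = (F j (ms j) \<bullet> us j) *\<^sub>R us j" using us_unit[of j]
      by (simp add: norm_eq_1)
  qed
  moreover have "(\<lambda>j. (F j (ms j) \<bullet> us j) *\<^sub>R us j) \<longlonglongrightarrow> (F0 m \<bullet> u) *\<^sub>R u"
    using F_lim ms_lim us_lim by (intro tendsto_intros)
  ultimately have "F0 m = (F0 m \<bullet> u) *\<^sub>R u"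
    using LIMSEQ_unique[OF tendsto_apply[OF ms_lim]] by metis
  then show ?thesis by (metis span_base span_mul singletonI)
qed

lemma eventually_apply_mem:
  assumes "g \<longlonglongrightarrow> y0" "F0 y0 \<in> interior B"
  shows "eventually (\<lambda>j. F j (g j) \<in> B) sequentially"
  using topological_tendstoD[OF tendsto_apply[OF assms(1)] open_interior assms(2)]
  by (rule eventually_mono) (use interior_subset in blast)

lemma F0_scaled_interior:
  assumes "F0 y \<in> B" "0 < t" "t < 1"
  shows "F0 (t *\<^sub>R y) \<in> interior B"
  using convex_scaleR_below_one_interior[OF convex_B zero_interior_B assms(1)] assms(2,3)
  by (simp add: blinfun.scaleR_right)

lemma F0_ball: "{y. x \<bullet> y = 0} \<inter> cball 0 (1/2) \<subseteq> F0 -` B"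
proof
  fix y assume y: "y \<in> {y. x \<bullet> y = 0} \<inter> cball 0 (1/2)"
  have "F j (radial_part (xs j) y) \<in> B" for j
    using frame_ball[OF radial_part_xs_mem] norm_radial_part_le[OF xs_unit, of j y] y by simp
  then show "y \<in> F0 -` B"
    using Lim_in_closed_set[OF closed_B _ sequentially_bot tendsto_apply[OF tendsto_radial_part_xs]]
      y
    by simp
qed

lemma F0_bounded: "{y. x \<bullet> y = 0} \<inter> F0 -` B \<subseteq> cball 0 2"
proof
  fix y assume y: "y \<in> {y. x \<bullet> y = 0} \<inter> F0 -` B"
  show "y \<in> cball 0 2"
  proof (rule closed_scaleR_below_one_imp_mem[OF closed_cball])
    fix t :: real assume t: "0 < t" "t < 1"
    have ty: "t *\<^sub>R y \<in> {y. x \<bullet> y = 0}" using y by simp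
    have "eventually (\<lambda>j. F j (radial_part (xs j) (t *\<^sub>R y)) \<in> B) sequentially"
      using eventually_apply_mem[OF tendsto_radial_part_xs[OF ty] F0_scaled_interior] y t by blast
    then have "eventually (\<lambda>j. radial_part (xs j) (t *\<^sub>R y) \<in> cball 0 2) sequentially"
      by (rule eventually_mono) (simp add: frame_bounded[OF radial_part_xs_mem])
    then show "t *\<^sub>R y \<in> cball 0 2"
      by (rule Lim_in_closed_set[OF closed_cball _ sequentially_bot tendsto_radial_part_xs[OF ty]])
  qed
qed

lemma frame_rotate_towards_mem:
  assumes y: "y \<in> {y. xs j \<bullet> y = 0}" "F j y \<in> B" and w: "w \<in> {y. xs j \<bullet> y = 0}"
    and rad: "radial_part (ms j) w \<noteq> 0"
  shows "F j (rotate_towards (ms j) y w) \<in> B"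
proof -
  have ms: "norm (ms j) = 1" "ms j \<in> {y. xs j \<bullet> y = 0}"
    and inv: "revolution_invariant {y. xs j \<bullet> y = 0} (ms j) ({y. xs j \<bullet> y = 0} \<inter> F j -` B)"
    using frames[of j] by (simp_all add: revolution_frame_def)
  have "rotate_towards (ms j) y w \<in> {y. xs j \<bullet> y = 0}"
    by (rule rotate_towards_in_subspace[OF subspace_hyperplane ms(2) w])
  then show ?thesis
    using revolution_invariantD[OF inv _ _ inner_rotate_towards[OF ms(1)]
        norm_rotate_towards[OF ms(1) rad]] y
    by blast
qed

lemma F0_scaled_rotation_mem:
  assumes y: "y \<in> {y. x \<bullet> y = 0}" "F0 y \<in> B" and z: "z \<in> {y. x \<bullet> y = 0}"
    and yz: "z \<bullet> m = y \<bullet> m" "norm z = norm y" and rad: "radial_part m z \<noteq> 0"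
    and t: "0 < t" "t < 1"
  shows "F0 (t *\<^sub>R z) \<in> B"
proof -
  define ys where "ys j = radial_part (xs j) (t *\<^sub>R y)" for j
  define ws where "ws j = radial_part (xs j) (t *\<^sub>R z)" for j
  have ys_lim: "ys \<longlonglongrightarrow> t *\<^sub>R y" and ws_lim: "ws \<longlonglongrightarrow> t *\<^sub>R z"
    unfolding ys_def ws_def using tendsto_radial_part_xs y z by simp_all
  have rad_t: "radial_part m (t *\<^sub>R z) \<noteq> 0" using rad t by (simp add: radial_part_scaleR)
  have "(\<lambda>j. rotate_towards (ms j) (ys j) (ws j)) \<longlonglongrightarrow> rotate_towards m (t *\<^sub>R y) (t *\<^sub>R z)"
    by (rule tendsto_rotate_towards[OF ms_lim ys_lim ws_lim rad_t])
  also have "rotate_towards m (t *\<^sub>R y) (t *\<^sub>R z) = t *\<^sub>R z"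
    using rotate_towards_self[OF m_unit] yz by simp
  finally have lim: "(\<lambda>j. rotate_towards (ms j) (ys j) (ws j)) \<longlonglongrightarrow> t *\<^sub>R z" .
  have "eventually (\<lambda>j. F j (ys j) \<in> B) sequentially"
    using eventually_apply_mem[OF ys_lim F0_scaled_interior[OF y(2) t]] .
  moreover have "(\<lambda>j. radial_part (ms j) (ws j)) \<longlonglongrightarrow> radial_part m (t *\<^sub>R z)"
    unfolding radial_part_def using ms_lim ws_lim by (intro tendsto_intros)
  then have "eventually (\<lambda>j. radial_part (ms j) (ws j) \<noteq> 0) sequentially"
    using tendsto_imp_eventually_ne rad_t by blast
  ultimately have "eventually (\<lambda>j. F j (rotate_towards (ms j) (ys j) (ws j)) \<in> B) sequentially"
    by eventually_elim
      (use frame_rotate_towards_mem radial_part_xs_mem in \<open>simp add: ys_def ws_def\<close>)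
  then show ?thesis
    by (rule Lim_in_closed_set[OF closed_B _ sequentially_bot tendsto_apply[OF lim]])
qed

lemma F0_invariant: "revolution_invariant {y. x \<bullet> y = 0} m ({y. x \<bullet> y = 0} \<inter> F0 -` B)"
  unfolding revolution_invariant_def
proof (intro ballI impI)
  fix y z assume y: "y \<in> {y. x \<bullet> y = 0} \<inter> F0 -` B" and z: "z \<in> {y. x \<bullet> y = 0}"
    and yz: "z \<bullet> m = y \<bullet> m \<and> norm z = norm y"
  have "F0 z \<in> B"
  proof (cases "radial_part m z = 0")
    case True
    then have "radial_part m y = 0"
      using norm_eq_iff_norm_radial_part_eq[OF m_unit, of z y] yz by simp
    then have "z = y" using True yz axial_plus_radial_part[of z m] axial_plus_radial_part[of y m]
      by simp
    then show ?thesis using y by simp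
  next
    case False
    have "closed (F0 -` B)" using closed_B by (intro closed_vimage continuous_intros)
    then show ?thesis
      using closed_scaleR_below_one_imp_mem[of "F0 -` B" z] F0_scaled_rotation_mem[OF _ _ z]
        y yz False
      by blast
  qed
  then show "z \<in> {y. x \<bullet> y = 0} \<inter> F0 -` B" using z by simp
qed

lemma revolution_frame_limit: "revolution_frame {y. x \<bullet> y = 0} B F0 m (span {u})"
  unfolding revolution_frame_def
  using blinfun.bounded_linear_right[THEN bounded_linear.linear] F0_image m_mem m_unit F0_axis
    F0_ball F0_bounded F0_invariant by blast

end

lemma sym_convex_body_zero_interior:
  fixes B :: "'a::euclidean_space set"
  assumes "sym_convex_body B"
  shows "0 \<in> interior B"
proof -
  have B: "convex B" "interior B \<noteq> {}" "uminus ` B = B"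
    using assms by (simp_all add: sym_convex_body_def)
  then obtain p where p: "p \<in> interior B" by blast
  then have "- p \<in> interior B" using interior_negations[of B] B(3) by (metis imageI)
  then have "midpoint p (- p) \<in> interior B"
    by (rule convex_midpoint_mem[OF convex_interior[OF B(1)] p])
  then show ?thesis by (simp add: midpoint_def)
qed

lemma sym_convex_body_ball_subset:
  fixes B :: "'a::euclidean_space set"
  assumes "sym_convex_body B"
  obtains \<rho> R where "\<rho> > 0" "ball 0 \<rho> \<subseteq> B" "B \<subseteq> cball 0 R"
proof -
  obtain \<rho> where \<rho>: "\<rho> > 0" "ball 0 \<rho> \<subseteq> interior B"
    using openE[OF open_interior sym_convex_body_zero_interior[OF assms]] by blast
  have "bounded B" using assms by (simp add: sym_convex_body_def compact_imp_bounded)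
  then obtain R where "\<forall>w\<in>B. norm w \<le> R" by (auto simp: bounded_pos)
  then have "B \<subseteq> cball 0 R" by auto
  then show ?thesis using that \<rho> interior_subset by blast
qed

lemma bounded_pair_convergent_subsequence:
  fixes f :: "nat \<Rightarrow> 'a::heine_borel" and g :: "nat \<Rightarrow> 'b::heine_borel"
  assumes "bounded (range f)" "bounded (range g)"
  obtains r a b where "strict_mono r" "(f \<circ> r) \<longlonglongrightarrow> a" "(g \<circ> r) \<longlonglongrightarrow> b"
proof -
  have "bounded (range (\<lambda>i. (f i, g i)))"
    using bounded_Times[OF assms] by (rule bounded_subset) auto
  then obtain l r where r: "strict_mono r" and lim: "((\<lambda>i. (f i, g i)) \<circ> r) \<longlonglongrightarrow> l"
    using bounded_imp_convergent_subsequence by blast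
  have "(f \<circ> r) \<longlonglongrightarrow> fst l" "(g \<circ> r) \<longlonglongrightarrow> snd l"
    using tendsto_fst[OF lim] tendsto_snd[OF lim] by (simp_all add: o_def)
  then show ?thesis using that r by blast
qed

lemma bounded_frame_sequence:
  fixes B :: "'a::euclidean_space set" and xs :: "nat \<Rightarrow> 'a"
  assumes B: "ball 0 \<rho> \<subseteq> B" "\<rho> > 0" "B \<subseteq> cball 0 R" and xs: "\<And>i. norm (xs i) = 1"
    and aff: "\<And>i. affine_sym_body_of_revolution_in {y. xs i \<bullet> y = 0} ({y. xs i \<bullet> y = 0} \<inter> B) (Ls i)"
  obtains F :: "nat \<Rightarrow> 'a \<Rightarrow>\<^sub>L 'a" and ms
  where "\<And>i. revolution_frame {y. xs i \<bullet> y = 0} B (F i) (ms i) (Ls i)" "\<And>i. norm (F i) \<le> 2 * R"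
proof -
  have "\<exists>N m. revolution_frame {y. xs i \<bullet> y = 0} B N m (Ls i)" for i
    using affine_sym_body_of_revolution_in_imp_frame[OF subspace_hyperplane B(1,2) aff] by metis
  then obtain N ms where N: "\<And>i. revolution_frame {y. xs i \<bullet> y = 0} B (N i) (ms i) (Ls i)" by metis
  define F where "F i = Blinfun (\<lambda>y. N i (radial_part (xs i) y))" for i
  have lin: "linear (\<lambda>y. N i (radial_part (xs i) y))" for i
    using linear_compose[OF linear_radial_part, of "N i"] N[of i]
    by (simp add: revolution_frame_def o_def)
  have F: "F i y = N i (radial_part (xs i) y)" for i y
    using lin[of i] by (simp add: F_def bounded_linear_Blinfun_apply linear_conv_bounded_linear)
  have proj: "radial_part (xs i) y = y" if "y \<in> {y. xs i \<bullet> y = 0}" for i y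
    using that by (simp add: radial_part_def inner_commute)
  have "revolution_frame {y. xs i \<bullet> y = 0} B (F i) (ms i) (Ls i)" for i
  proof (rule revolution_frame_cong[OF N[of i]])
    show "linear (blinfun_apply (F i))"
      by (rule bounded_linear.linear[OF blinfun.bounded_linear_right])
    show "F i y = N i y" if "y \<in> {y. xs i \<bullet> y = 0}" for y using proj[OF that] by (simp add: F)
  qed
  moreover have "norm (F i) \<le> 2 * R" for i
  proof (rule norm_blinfun_bound)
    have "0 \<in> B" using B(1,2) by auto
    then show "0 \<le> 2 * R" using B(3) by auto
    show "norm (F i y) \<le> 2 * R * norm y" for y
    proof -
      have "radial_part (xs i) y \<in> {y. xs i \<bullet> y = 0}"
        using radial_part_orthogonal[OF xs] by (simp add: inner_commute)
      then have "norm (F i y) \<le> 2 * R * norm (radial_part (xs i) y)"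
        using revolution_frame_norm_le[OF N subspace_hyperplane B(3)] by (simp add: F)
      also have "\<dots> \<le> 2 * R * norm y"
        using norm_radial_part_le[OF xs] \<open>0 \<le> 2 * R\<close> by (rule mult_left_mono)
      finally show ?thesis .
    qed
  qed
  ultimately show ?thesis using that by blast
qed

theorem mainTheorem13:
  fixes B :: "'a::euclidean_space set"
    and xs :: "nat \<Rightarrow> 'a" and x :: 'a
    and Ls :: "nat \<Rightarrow> 'a set" and L :: "'a set"
  assumes "sym_convex_body B"
    and "\<And>i. xs i \<in> sphere 0 1" and "x \<in> sphere 0 1"
    and "xs \<longlonglongrightarrow> x"
    and "\<And>i. affine_sym_body_of_revolution_in {y. xs i \<bullet> y = 0} ({y. xs i \<bullet> y = 0} \<inter> B) (Ls i)"
    and "\<And>i. Ls i \<in> RP_lines"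
    and "L \<in> RP_lines"
    and "limitin RP_topology Ls L sequentially"
  shows "affine_sym_body_of_revolution_in {y. x \<bullet> y = 0} ({y. x \<bullet> y = 0} \<inter> B) L"
proof -
  have B: "closed B" "convex B" "uminus ` B = B" and B0: "0 \<in> interior B"
    using assms(1) compact_imp_closed sym_convex_body_zero_interior
    by (auto simp: sym_convex_body_def)
  obtain \<rho> R where \<rho>: "\<rho> > 0" "ball 0 \<rho> \<subseteq> B" and R: "B \<subseteq> cball 0 R"
    using sym_convex_body_ball_subset[OF assms(1)] by blast
  have xs_unit: "\<And>i. norm (xs i) = 1" using assms(2) by simp
  obtain F :: "nat \<Rightarrow> 'a \<Rightarrow>\<^sub>L 'a" and ms
    where frames: "\<And>i. revolution_frame {y. xs i \<bullet> y = 0} B (F i) (ms i) (Ls i)"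
    and bound: "\<And>i. norm (F i) \<le> 2 * R"
    using bounded_frame_sequence[where Ls = Ls, OF \<rho>(2,1) R xs_unit assms(5)] by blast
  obtain u us where u: "L = span {u}" and us: "\<And>i. norm (us i) = 1" "\<And>i. Ls i = span {us i}"
    and us_lim: "us \<longlonglongrightarrow> u"
    using limitin_RP_topology_unit_representatives[OF assms(6-8)] by blast
  have "bounded (range F)" "bounded (range ms)"
    using bound frames by (auto simp: bounded_iff revolution_frame_def)
  then obtain r F0 m where r: "strict_mono r" and lim: "(F \<circ> r) \<longlonglongrightarrow> F0" "(ms \<circ> r) \<longlonglongrightarrow> m"
    by (rule bounded_pair_convergent_subsequence)
  interpret converging_frames B "xs \<circ> r" x "F \<circ> r" F0 "ms \<circ> r" m "us \<circ> r" u
    using B B0 xs_unit LIMSEQ_subseq_LIMSEQ[OF assms(4) r] LIMSEQ_subseq_LIMSEQ[OF us_lim r]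
      us frames lim
    by unfold_locales (auto simp: o_def)
  show ?thesis
    using revolution_frame_imp_affine_sym_body_of_revolution_in[OF revolution_frame_limit
        subspace_hyperplane RP_lines_is_line[OF assms(7), unfolded u] B] u
    by simp
qed

end
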